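(* Let $K=\mathsf{p}^k$ and let $\mathcal{C}\subset (\mathbb{C}^{\mathsf{p}})^{\otimes n}$ be a subspace with orthonormal basis $\{\psi_\alpha\}_{\alpha\in [K]}$ such that, for some $\gamma>0$, \[ \big|\langle\psi_\alpha| F|\psi_\beta\rangle-\delta_{\alpha,\beta}\langle\psi_1| F|\psi_1\rangle\big|\leq \gamma\, \|F\|\qquad\text{for all }\alpha,\beta\in [K] \] and for every $d$-local operator $F$ on $(\mathbb{C}^{\mathsf{p}})^{\otimes n}$. Let $\delta > K^5\gamma^2$. Then $\mathcal{C}$ is an $(\epsilon,\delta)[[n,k,d]]$-AQEDC with $\epsilon=K^5\gamma^2 \delta^{-1}$.
   Context: An operator on $(\mathbb{C}^\mathsf{p})^{\otimes n}$ is $d$-local if it is of the form $F_S\otimes I_{[n]\setminus S}$ for some set $S\subset[n]$ of $d$ sites (the sites need not be contiguous); $\|\cdot\|$ is the operator norm. For a CPTP map $\mathcal{N}$ on $\mathcal{B}((\mathbb{C}^\mathsf{p})^{\otimes n})$ and a subspace $\mathcal{C}$ with projection $P$, $\mathcal{C}$ is an $(\epsilon,\delta)$-approximate error-detection code for $\mathcal{N}$ if for every unit vector $|\Psi\rangle\in\mathcal{C}$: if $\mathrm{tr}(P\mathcal{N}(|\Psi\rangle\langle\Psi|))\geq\delta$ then $\langle\Psi|\rho_{\mathcal{N},P}|\Psi\rangle\geq 1-\epsilon$, where $\rho_{\mathcal{N},P}=\mathrm{tr}(P\mathcal{N}(|\Psi\rangle\langle\Psi|))^{-1}P\mathcal{N}(|\Psi\rangle\langle\Psi|)P$.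 An $(\epsilon,\delta)[[n,k,d]]$-AQEDC is a $\mathsf{p}^k$-dimensional subspace $\mathcal{C}\subset(\mathbb{C}^\mathsf{p})^{\otimes n}$ which is an $(\epsilon,\delta)$-approximate error-detection code for every CPTP map of the form $\mathcal{N}(\rho)=\sum_{j\in[J]}p_jF_j\rho F_j^\dagger$, where each $F_j$ is $d$-local with $\|F_j\|\le 1$ and $\{p_j\}$ is a probability distribution. *)

theory Defs
  imports "HOL-Analysis.Analysis" "HOL-Library.Function_Algebras"
begin

text \<open>The Hilbert space (C^p)^{tensor n} is modelled by complex-valued functions on the
  computational basis, i.e. on configurations x : {0..<n} -> {0..<p} (extensional).
  Vectors are functions cfg => complex (only values on cfgs p n matter; elements of the
  space are those vanishing outside).  Operators are kernels (matrices) cfg => cfg => complex.\<close>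

type_synonym cfg = "nat \<Rightarrow> nat"
type_synonym qvec = "cfg \<Rightarrow> complex"
type_synonym qop = "cfg \<Rightarrow> cfg \<Rightarrow> complex"

definition cfgs :: "nat \<Rightarrow> nat \<Rightarrow> cfg set" where
  "cfgs p n = {..<n} \<rightarrow>\<^sub>E {..<p}"

definition hilb :: "nat \<Rightarrow> nat \<Rightarrow> qvec set" where
  "hilb p n = {v. \<forall>x. x \<notin> cfgs p n \<longrightarrow> v x = 0}"

definition qscale :: "complex \<Rightarrow> qvec \<Rightarrow> qvec" where
  "qscale c v = (\<lambda>x. c * v x)"

definition qinner :: "nat \<Rightarrow> nat \<Rightarrow> qvec \<Rightarrow> qvec \<Rightarrow> complex" where
  "qinner p n u v = (\<Sum>x\<in>cfgs p n. cnj (u x) * v x)"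

definition qnorm :: "nat \<Rightarrow> nat \<Rightarrow> qvec \<Rightarrow> real" where
  "qnorm p n v = sqrt (\<Sum>x\<in>cfgs p n. (cmod (v x))\<^sup>2)"

definition qapply :: "nat \<Rightarrow> nat \<Rightarrow> qop \<Rightarrow> qvec \<Rightarrow> qvec" where
  "qapply p n F v = (\<lambda>x. if x \<in> cfgs p n then (\<Sum>y\<in>cfgs p n. F x y * v y) else 0)"

definition qmult :: "nat \<Rightarrow> nat \<Rightarrow> qop \<Rightarrow> qop \<Rightarrow> qop" where
  "qmult p n A B = (\<lambda>x z. \<Sum>y\<in>cfgs p n. A x y * B y z)"

definition qadj :: "qop \<Rightarrow> qop" where
  "qadj A = (\<lambda>x y. cnj (A y x))"

definition qtrace :: "nat \<Rightarrow> nat \<Rightarrow> qop \<Rightarrow> complex" where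
  "qtrace p n A = (\<Sum>x\<in>cfgs p n. A x x)"

definition ketbra :: "qvec \<Rightarrow> qvec \<Rightarrow> qop" where
  "ketbra u v = (\<lambda>x y. u x * cnj (v y))"

definition opnorm :: "nat \<Rightarrow> nat \<Rightarrow> qop \<Rightarrow> real" where
  "opnorm p n F = Sup {qnorm p n (qapply p n F v) | v. v \<in> hilb p n \<and> qnorm p n v = 1}"

text \<open>d-local operator: F = F_S \<otimes> I on the complement, for a set S of d sites.\<close>
definition d_local :: "nat \<Rightarrow> nat \<Rightarrow> nat \<Rightarrow> qop \<Rightarrow> bool" where
  "d_local p n d F \<longleftrightarrow> (\<exists>S G. S \<subseteq> {..<n} \<and> card S = d \<and>
     (\<forall>x\<in>cfgs p n. \<forall>y\<in>cfgs p n.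
        F x y = (if (\<forall>i\<in>{..<n} - S. x i = y i) then G (restrict x S) (restrict y S) else 0)))"

definition kraus_channel :: "nat \<Rightarrow> nat \<Rightarrow> 'j set \<Rightarrow> ('j \<Rightarrow> real) \<Rightarrow> ('j \<Rightarrow> qop) \<Rightarrow> qop \<Rightarrow> qop" where
  "kraus_channel p n J pr F \<rho> =
     (\<lambda>x y. \<Sum>j\<in>J. complex_of_real (pr j) * qmult p n (qmult p n (F j) \<rho>) (qadj (F j)) x y)"

definition admissible_noise :: "nat \<Rightarrow> nat \<Rightarrow> nat \<Rightarrow> 'j set \<Rightarrow> ('j \<Rightarrow> real) \<Rightarrow> ('j \<Rightarrow> qop) \<Rightarrow> bool" where
  "admissible_noise p n d J pr F \<longleftrightarrow> finite J \<and> (\<forall>j\<in>J. pr j \<ge> 0) \<and> (\<Sum>j\<in>J. pr j) = 1 \<and>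
     (\<forall>j\<in>J. d_local p n d (F j) \<and> opnorm p n (F j) \<le> 1)"

definition approx_detection_code ::
  "nat \<Rightarrow> nat \<Rightarrow> real \<Rightarrow> real \<Rightarrow> (qop \<Rightarrow> qop) \<Rightarrow> qvec set \<Rightarrow> qop \<Rightarrow> bool" where
  "approx_detection_code p n \<epsilon> \<delta> N C P \<longleftrightarrow>
     (\<forall>\<Psi>\<in>C. qnorm p n \<Psi> = 1 \<longrightarrow>
        (let t = qtrace p n (qmult p n P (N (ketbra \<Psi> \<Psi>)));
             \<rho> = (\<lambda>x y. inverse t * qmult p n (qmult p n P (N (ketbra \<Psi> \<Psi>))) P x y)
         in Re t \<ge> \<delta> \<longrightarrow> Re (qinner p n \<Psi> (qapply p n \<rho> \<Psi>)) \<ge> 1 - \<epsilon>))"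

definition is_projection_onto :: "nat \<Rightarrow> nat \<Rightarrow> qvec set \<Rightarrow> qop \<Rightarrow> bool" where
  "is_projection_onto p n C P \<longleftrightarrow>
     (\<forall>x y. (x \<notin> cfgs p n \<or> y \<notin> cfgs p n) \<longrightarrow> P x y = 0) \<and>
     (\<forall>v\<in>hilb p n. qapply p n P v \<in> C \<and> (\<forall>w\<in>C. qinner p n w (v - qapply p n P v) = 0))"

text \<open>(\<epsilon>,\<delta>)[[n,k,d]]-AQEDC over qudits of dimension p.
  The noise index set ranges over nat (any finite family can be reindexed by naturals).\<close>
definition AQEDC :: "nat \<Rightarrow> real \<Rightarrow> real \<Rightarrow> nat \<Rightarrow> nat \<Rightarrow> nat \<Rightarrow> qvec set \<Rightarrow> bool" where
  "AQEDC p \<epsilon> \<delta> n k d C \<longleftrightarrow>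
     C \<subseteq> hilb p n \<and> module.subspace qscale C \<and> vector_space.dim qscale C = p ^ k \<and>
     (\<forall>P. is_projection_onto p n C P \<longrightarrow>
        (\<forall>(J::nat set) pr F. admissible_noise p n d J pr F \<longrightarrow>
           approx_detection_code p n \<epsilon> \<delta> (kraus_channel p n J pr F) C P))"

end

theory Submission
  imports Defs
begin

(*
  For a unit vector Psi of the code and a Kraus operator F_j put a_j = F_j Psi. Then
  tr(P N(|Psi><Psi|)) = sum_j p_j |P a_j|^2 and <Psi| P N(|Psi><Psi|) P |Psi> = sum_j p_j |<Psi, a_j>|^2,
  so the fidelity after detection is at least 1 - B/delta as soon as every leakage
  |P a_j|^2 - |<Psi, a_j>|^2 is at most B.
  In the code basis, P a_j has coefficients mu c + e, where c are the coefficients of Psi,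
  mu = <psi_0|F_j|psi_0> and e = E c with |E_ab| <= gamma by the hypothesis on F_j.
  The leakage does not change when the multiple mu c of Psi is removed, so it is at most
  |e|^2 <= K^3 gamma^2 <= K^5 gamma^2.
*)

lemma sum_fun_apply: "(\<Sum>w\<in>A. f w) x = (\<Sum>w\<in>A. f w x)"
  by (induction A rule: infinite_finite_induct) auto

lemma of_real_sum_cmod_sq: "of_real (\<Sum>\<alpha>\<in>A. (cmod (f \<alpha>))\<^sup>2) = (\<Sum>\<alpha>\<in>A. cnj (f \<alpha>) * f \<alpha>)"
  unfolding of_real_sum complex_norm_square by (simp add: mult.commute)

lemma sum_sq_shift_diff_eq:
  fixes c e :: "'i \<Rightarrow> complex"
  assumes "(\<Sum>\<alpha>\<in>A. (cmod (c \<alpha>))\<^sup>2) = 1"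
  shows "(\<Sum>\<alpha>\<in>A. (cmod (\<mu> * c \<alpha> + e \<alpha>))\<^sup>2) - (cmod (\<Sum>\<alpha>\<in>A. cnj (c \<alpha>) * (\<mu> * c \<alpha> + e \<alpha>)))\<^sup>2
       = (\<Sum>\<alpha>\<in>A. (cmod (e \<alpha>))\<^sup>2) - (cmod (\<Sum>\<alpha>\<in>A. cnj (c \<alpha>) * e \<alpha>))\<^sup>2"
proof -
  define S where "S = (\<Sum>\<alpha>\<in>A. cnj (c \<alpha>) * e \<alpha>)"
  have c: "(\<Sum>\<alpha>\<in>A. cnj (c \<alpha>) * c \<alpha>) = 1"
    using assms of_real_sum_cmod_sq[of c A] by simp
  have mean: "(\<Sum>\<alpha>\<in>A. cnj (c \<alpha>) * (\<mu> * c \<alpha> + e \<alpha>)) = \<mu> + S"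
    using c by (simp add: S_def distrib_left sum.distrib mult.left_commute[of _ \<mu>] sum_distrib_left[symmetric])
  have "cnj (\<mu> * c \<alpha> + e \<alpha>) * (\<mu> * c \<alpha> + e \<alpha>)
      = cnj \<mu> * \<mu> * (cnj (c \<alpha>) * c \<alpha>) + cnj \<mu> * (cnj (c \<alpha>) * e \<alpha>)
        + \<mu> * cnj (cnj (c \<alpha>) * e \<alpha>) + cnj (e \<alpha>) * e \<alpha>" for \<alpha>
    by (simp add: algebra_simps)
  then have "(\<Sum>\<alpha>\<in>A. cnj (\<mu> * c \<alpha> + e \<alpha>) * (\<mu> * c \<alpha> + e \<alpha>))
      = cnj \<mu> * \<mu> + cnj \<mu> * S + \<mu> * cnj S + (\<Sum>\<alpha>\<in>A. cnj (e \<alpha>) * e \<alpha>)"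
    by (simp only: sum.distrib sum_distrib_left[symmetric] cnj_sum[symmetric] c S_def mult_1_right)
  then have "of_real ((\<Sum>\<alpha>\<in>A. (cmod (\<mu> * c \<alpha> + e \<alpha>))\<^sup>2)
        - (cmod (\<Sum>\<alpha>\<in>A. cnj (c \<alpha>) * (\<mu> * c \<alpha> + e \<alpha>)))\<^sup>2)
      = (\<Sum>\<alpha>\<in>A. cnj (e \<alpha>) * e \<alpha>) - S * cnj S"
    by (simp only: of_real_diff of_real_sum_cmod_sq mean complex_norm_square) (simp add: algebra_simps)
  also have "\<dots> = of_real ((\<Sum>\<alpha>\<in>A. (cmod (e \<alpha>))\<^sup>2) - (cmod S)\<^sup>2)"
    by (simp only: of_real_diff of_real_sum_cmod_sq complex_norm_square)
  finally show ?thesis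
    unfolding S_def of_real_eq_iff .
qed

lemma sum_sq_matrix_vector_le:
  fixes c :: "'i \<Rightarrow> complex" and E :: "'i \<Rightarrow> 'i \<Rightarrow> complex"
  assumes A: "finite A" and c: "(\<Sum>\<beta>\<in>A. (cmod (c \<beta>))\<^sup>2) = 1"
    and E: "\<forall>\<alpha>\<in>A. \<forall>\<beta>\<in>A. cmod (E \<alpha> \<beta>) \<le> \<gamma>"
  shows "(\<Sum>\<alpha>\<in>A. (cmod (\<Sum>\<beta>\<in>A. E \<alpha> \<beta> * c \<beta>))\<^sup>2) \<le> real (card A) ^ 3 * \<gamma>\<^sup>2"
proof -
  have c_le: "cmod (c \<beta>) \<le> 1" if "\<beta> \<in> A" for \<beta>
  proof -
    have "(cmod (c \<beta>))\<^sup>2 \<le> 1"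
      using c member_le_sum[OF that, of "\<lambda>\<beta>. (cmod (c \<beta>))\<^sup>2"] A by simp
    then show ?thesis
      by (simp add: power_le_one_iff)
  qed
  have row: "cmod (\<Sum>\<beta>\<in>A. E \<alpha> \<beta> * c \<beta>) \<le> real (card A) * \<gamma>" if "\<alpha> \<in> A" for \<alpha>
  proof -
    have "cmod (\<Sum>\<beta>\<in>A. E \<alpha> \<beta> * c \<beta>) \<le> (\<Sum>\<beta>\<in>A. cmod (E \<alpha> \<beta>) * cmod (c \<beta>))"
      using norm_sum[of "\<lambda>\<beta>. E \<alpha> \<beta> * c \<beta>" A] by (simp add: norm_mult)
    also have "\<dots> \<le> (\<Sum>\<beta>\<in>A. \<gamma>)"
    proof (rule sum_mono)
      fix \<beta> assume "\<beta> \<in> A"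
      then have "cmod (E \<alpha> \<beta>) * cmod (c \<beta>) \<le> cmod (E \<alpha> \<beta>)"
        using c_le by (simp add: mult_left_le)
      also have "\<dots> \<le> \<gamma>"
        using E that \<open>\<beta> \<in> A\<close> by blast
      finally show "cmod (E \<alpha> \<beta>) * cmod (c \<beta>) \<le> \<gamma>" .
    qed
    finally show ?thesis
      by simp
  qed
  have "(\<Sum>\<alpha>\<in>A. (cmod (\<Sum>\<beta>\<in>A. E \<alpha> \<beta> * c \<beta>))\<^sup>2) \<le> (\<Sum>\<alpha>\<in>A. (real (card A) * \<gamma>)\<^sup>2)"
    using row by (intro sum_mono power_mono) auto
  also have "\<dots> = real (card A) ^ 3 * \<gamma>\<^sup>2"
    by (simp add: power2_eq_square power3_eq_cube)
  finally show ?thesis .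
qed

lemma detection_fidelity_ge:
  fixes B T N \<delta> :: real
  assumes "0 < \<delta>" "\<delta> \<le> T" "T - N \<le> B" "0 \<le> B"
  shows "1 - B / \<delta> \<le> N / T"
proof -
  have "1 - B / \<delta> \<le> 1 - B / T"
    using assms by (simp add: frac_le)
  also have "\<dots> \<le> N / T"
  proof -
    have "T * T \<le> (B + N) * T"
      using assms by (intro mult_right_mono) auto
    then show ?thesis
      using assms by (simp add: field_simps)
  qed
  finally show ?thesis .
qed

interpretation qvec: vector_space qscale
  by unfold_locales (auto simp: qscale_def fun_eq_iff algebra_simps)

lemma finite_cfgs [simp]: "finite (cfgs p n)"
  by (simp add: cfgs_def finite_PiE)

lemma sum_qscale_image:
  "inj_on \<psi> A \<Longrightarrow> (\<Sum>w\<in>\<psi> ` A. qscale (u w) w) = (\<lambda>x. \<Sum>\<alpha>\<in>A. u (\<psi> \<alpha>) * \<psi> \<alpha> x)"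
  by (simp add: sum.reindex qscale_def fun_eq_iff sum_fun_apply)

lemma qinner_sum_right:
  "finite A \<Longrightarrow> qinner p n u (\<lambda>x. \<Sum>j\<in>A. c j * v j x) = (\<Sum>j\<in>A. c j * qinner p n u (v j))"
  unfolding qinner_def by (simp add: sum_distrib_left sum_distrib_right mult_ac sum.swap[of _ A])

lemma qinner_sum_left:
  "finite A \<Longrightarrow> qinner p n (\<lambda>x. \<Sum>j\<in>A. c j * v j x) u = (\<Sum>j\<in>A. cnj (c j) * qinner p n (v j) u)"
  unfolding qinner_def by (simp add: sum_distrib_left sum_distrib_right mult_ac sum.swap[of _ A])

lemma qinner_commute: "qinner p n v u = cnj (qinner p n u v)"
  unfolding qinner_def by (simp add: mult.commute)

lemma qinner_diff_right: "qinner p n u (v - w) = qinner p n u v - qinner p n u w"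
  unfolding qinner_def by (simp add: algebra_simps sum_subtractf)

lemma qinner_qscale_right: "qinner p n u (qscale c v) = c * qinner p n u v"
  unfolding qinner_def qscale_def by (simp add: algebra_simps sum_distrib_left)

lemma qinner_self: "qinner p n v v = of_real ((qnorm p n v)\<^sup>2)"
proof -
  have "(qnorm p n v)\<^sup>2 = (\<Sum>x\<in>cfgs p n. (cmod (v x))\<^sup>2)"
    unfolding qnorm_def by (simp add: sum_nonneg)
  moreover have "qinner p n v v = of_real (\<Sum>x\<in>cfgs p n. (cmod (v x))\<^sup>2)"
    unfolding qinner_def of_real_sum complex_norm_square by (simp add: mult.commute)
  ultimately show ?thesis by simp
qed

lemma qinner_self_eq_0:
  assumes "v \<in> hilb p n" and "qinner p n v v = 0"
  shows "v = 0"
proof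
  fix x
  have "(qnorm p n v)\<^sup>2 = 0"
    using assms(2) by (metis qinner_self of_real_eq_0_iff)
  then have "(\<Sum>x\<in>cfgs p n. (cmod (v x))\<^sup>2) = 0"
    unfolding qnorm_def by (simp add: sum_nonneg)
  then have "\<forall>x\<in>cfgs p n. v x = 0"
    by (simp add: sum_nonneg_eq_0_iff)
  with assms(1) show "v x = 0 x"
    unfolding hilb_def by auto
qed

lemma qapply_outside [simp]: "x \<notin> cfgs p n \<Longrightarrow> qapply p n F v x = 0"
  unfolding qapply_def by simp

lemma qapply_in_hilb: "qapply p n F v \<in> hilb p n"
  unfolding hilb_def by simp

lemma qapply_sum:
  "finite A \<Longrightarrow> qapply p n F (\<lambda>x. \<Sum>j\<in>A. c j * v j x) = (\<lambda>x. \<Sum>j\<in>A. c j * qapply p n F (v j) x)"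
  unfolding qapply_def
  by (auto simp: fun_eq_iff sum_distrib_left sum_distrib_right mult_ac sum.swap[of _ A])

lemma qapply_qmult: "qapply p n (qmult p n A B) v = qapply p n A (qapply p n B v)"
  unfolding qapply_def qmult_def
  by (auto simp: fun_eq_iff sum_distrib_left sum_distrib_right mult_ac intro!: sum.cong sum.swap)

lemma qapply_scaled_kernel: "qapply p n (\<lambda>x y. z * M x y) v = qscale z (qapply p n M v)"
  unfolding qapply_def qscale_def by (auto simp: fun_eq_iff sum_distrib_left mult.assoc)

lemma subspace_hilb: "qvec.subspace (hilb p n)"
  unfolding qvec.subspace_def hilb_def qscale_def by auto

lemma projection_in_space:
  "is_projection_onto p n C P \<Longrightarrow> v \<in> hilb p n \<Longrightarrow> qapply p n P v \<in> C"
  unfolding is_projection_onto_def by blast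

lemma qinner_projection_right:
  assumes "is_projection_onto p n C P" and "w \<in> C" and "v \<in> hilb p n"
  shows "qinner p n w (qapply p n P v) = qinner p n w v"
  using assms unfolding is_projection_onto_def by (simp add: qinner_diff_right)

lemma qinner_projection_self:
  assumes "is_projection_onto p n C P" and "v \<in> hilb p n"
  shows "qinner p n v (qapply p n P v) = of_real ((qnorm p n (qapply p n P v))\<^sup>2)"
proof -
  have "qinner p n (qapply p n P v) v = qinner p n (qapply p n P v) (qapply p n P v)"
    using assms by (simp add: qinner_projection_right projection_in_space)
  then show ?thesis
    by (metis qinner_commute qinner_self complex_cnj_complex_of_real)
qed

lemma projection_fixes_space:
  assumes P: "is_projection_onto p n C P" and C: "qvec.subspace C" "C \<subseteq> hilb p n"
    and "v \<in> C"
  shows "qapply p n P v = v"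
proof -
  define w where "w = v - qapply p n P v"
  have v: "v \<in> hilb p n" using \<open>v \<in> C\<close> C by blast
  have "w \<in> C"
    unfolding w_def using \<open>v \<in> C\<close> C P v by (simp add: qvec.subspace_diff projection_in_space)
  then have "qinner p n w w = 0"
    using P v by (simp add: w_def qinner_diff_right qinner_projection_right)
  moreover have "w \<in> hilb p n"
    unfolding w_def using v by (simp add: qvec.subspace_diff[OF subspace_hilb] qapply_in_hilb)
  ultimately show ?thesis
    using qinner_self_eq_0 unfolding w_def by force
qed

lemma kraus_channel_ketbra:
  assumes "x \<in> cfgs p n" "z \<in> cfgs p n"
  shows "kraus_channel p n J pr F (ketbra \<Psi> \<Psi>) x z =
    (\<Sum>j\<in>J. of_real (pr j) * (qapply p n (F j) \<Psi> x * cnj (qapply p n (F j) \<Psi> z)))"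
proof -
  have "qmult p n (qmult p n G (ketbra \<Psi> \<Psi>)) (qadj G) x z = qapply p n G \<Psi> x * cnj (qapply p n G \<Psi> z)" for G
    using assms unfolding qmult_def ketbra_def qadj_def qapply_def
    by (simp add: sum_distrib_left sum_distrib_right mult_ac)
  then show ?thesis
    unfolding kraus_channel_def by simp
qed

lemma qtrace_kraus_ketbra:
  "finite J \<Longrightarrow> qtrace p n (qmult p n P (kraus_channel p n J pr F (ketbra \<Psi> \<Psi>))) =
    (\<Sum>j\<in>J. of_real (pr j) * qinner p n (qapply p n (F j) \<Psi>) (qapply p n P (qapply p n (F j) \<Psi>)))"
  unfolding qtrace_def qmult_def[of p n P] qinner_def qapply_def[of p n P]
  by (simp add: kraus_channel_ketbra qapply_in_hilb sum_distrib_left sum_distrib_right mult_ac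
      sum.swap[of _ J] cong: sum.cong)

lemma qapply_kraus_ketbra:
  "finite J \<Longrightarrow> qapply p n (kraus_channel p n J pr F (ketbra \<Psi> \<Psi>)) \<Psi> =
    (\<lambda>x. \<Sum>j\<in>J. (of_real (pr j) * qinner p n (qapply p n (F j) \<Psi>) \<Psi>) * qapply p n (F j) \<Psi> x)"
  unfolding qapply_def[of p n "kraus_channel p n J pr F (ketbra \<Psi> \<Psi>)"] qinner_def
  by (auto simp: fun_eq_iff kraus_channel_ketbra
      sum_distrib_left sum_distrib_right mult_ac sum.swap[of _ J] cong: sum.cong)

lemma approx_detection_code_kraus_channel:
  assumes C: "qvec.subspace C" "C \<subseteq> hilb p n" and P: "is_projection_onto p n C P"
    and J: "finite J" "\<forall>j\<in>J. 0 \<le> pr j" "(\<Sum>j\<in>J. pr j) = 1"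
    and leakage: "\<And>\<Psi> j. \<Psi> \<in> C \<Longrightarrow> qnorm p n \<Psi> = 1 \<Longrightarrow> j \<in> J \<Longrightarrow>
      (qnorm p n (qapply p n P (qapply p n (F j) \<Psi>)))\<^sup>2
        - (cmod (qinner p n \<Psi> (qapply p n (F j) \<Psi>)))\<^sup>2 \<le> B"
    and B: "0 \<le> B" and \<delta>: "0 < \<delta>"
  shows "approx_detection_code p n (B / \<delta>) \<delta> (kraus_channel p n J pr F) C P"
  unfolding approx_detection_code_def Let_def
proof (intro ballI impI)
  fix \<Psi> assume \<Psi>: "\<Psi> \<in> C" and unit: "qnorm p n \<Psi> = 1"
  define a where "a j = qapply p n (F j) \<Psi>" for j
  define N where "N = kraus_channel p n J pr F (ketbra \<Psi> \<Psi>)"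
  define t where "t = qtrace p n (qmult p n P N)"
  define T where "T = (\<Sum>j\<in>J. pr j * (qnorm p n (qapply p n P (a j)))\<^sup>2)"
  define S where "S = (\<Sum>j\<in>J. pr j * (cmod (qinner p n \<Psi> (a j)))\<^sup>2)"
  have t: "t = of_real T"
    unfolding t_def N_def T_def qtrace_kraus_ketbra[OF J(1)] using P
    by (simp add: a_def qinner_projection_self qapply_in_hilb)
  have "qapply p n (qmult p n (qmult p n P N) P) \<Psi> = qapply p n P (qapply p n N \<Psi>)"
    using projection_fixes_space[OF P C \<Psi>] by (simp add: qapply_qmult)
  also have "\<dots> = (\<lambda>x. \<Sum>j\<in>J. (of_real (pr j) * qinner p n (a j) \<Psi>) * qapply p n P (a j) x)"
    unfolding N_def qapply_kraus_ketbra[OF J(1)] by (simp add: qapply_sum J(1) a_def)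
  finally have "qinner p n \<Psi> (qapply p n (qmult p n (qmult p n P N) P) \<Psi>)
      = (\<Sum>j\<in>J. (of_real (pr j) * qinner p n (a j) \<Psi>) * qinner p n \<Psi> (a j))"
    using P \<Psi> by (simp add: qinner_sum_right J(1) qinner_projection_right qapply_in_hilb a_def)
  also have "\<dots> = of_real S"
    unfolding S_def of_real_sum of_real_mult complex_norm_square
    by (simp add: qinner_commute[of p n "a _"] mult_ac)
  finally have fidelity: "qinner p n \<Psi> (qapply p n (\<lambda>x y. inverse t * qmult p n (qmult p n P N) P x y) \<Psi>)
      = of_real (S / T)"
    by (simp add: qapply_scaled_kernel qinner_qscale_right t divide_inverse mult.commute)
  have "T - S = (\<Sum>j\<in>J. pr j * ((qnorm p n (qapply p n P (a j)))\<^sup>2 - (cmod (qinner p n \<Psi> (a j)))\<^sup>2))"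
    unfolding T_def S_def by (simp add: sum_subtractf[symmetric] algebra_simps)
  also have "\<dots> \<le> (\<Sum>j\<in>J. pr j * B)"
    using J(2) leakage[OF \<Psi> unit] by (intro sum_mono mult_left_mono) (auto simp: a_def)
  finally have "T - S \<le> B"
    using J(3) by (simp add: sum_distrib_right[symmetric])
  then show "\<delta> \<le> Re t \<Longrightarrow> 1 - B / \<delta> \<le> Re (qinner p n \<Psi> (qapply p n (\<lambda>x y. inverse t * qmult p n (qmult p n P N) P x y) \<Psi>))"
    using detection_fidelity_ge[of \<delta> T S B] B \<delta> unfolding fidelity unfolding t by simp
qed

lemma AQEDC_of_leakage_le:
  assumes C: "qvec.subspace C" "C \<subseteq> hilb p n" "qvec.dim C = p ^ k"
    and leakage: "\<And>P \<Psi> F. is_projection_onto p n C P \<Longrightarrow> \<Psi> \<in> C \<Longrightarrow> qnorm p n \<Psi> = 1 \<Longrightarrow>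
      d_local p n d F \<Longrightarrow> opnorm p n F \<le> 1 \<Longrightarrow>
      (qnorm p n (qapply p n P (qapply p n F \<Psi>)))\<^sup>2 - (cmod (qinner p n \<Psi> (qapply p n F \<Psi>)))\<^sup>2 \<le> B"
    and B: "0 \<le> B" and \<delta>: "0 < \<delta>"
  shows "AQEDC p (B / \<delta>) \<delta> n k d C"
  unfolding AQEDC_def
proof (intro conjI allI impI C)
  fix P and J :: "nat set" and pr F
  assume P: "is_projection_onto p n C P" and "admissible_noise p n d J pr F"
  then have J: "finite J" "\<forall>j\<in>J. 0 \<le> pr j" "(\<Sum>j\<in>J. pr j) = 1"
    and F: "\<forall>j\<in>J. d_local p n d (F j) \<and> opnorm p n (F j) \<le> 1"
    unfolding admissible_noise_def by auto
  show "approx_detection_code p n (B / \<delta>) \<delta> (kraus_channel p n J pr F) C P"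
    using F by (intro approx_detection_code_kraus_channel[OF C(1,2) P J leakage[OF P] B \<delta>]) auto
qed

definition qorthonormal :: "nat \<Rightarrow> nat \<Rightarrow> nat \<Rightarrow> (nat \<Rightarrow> qvec) \<Rightarrow> bool" where
  "qorthonormal p n K \<psi> \<longleftrightarrow>
     (\<forall>\<alpha><K. \<forall>\<beta><K. qinner p n (\<psi> \<alpha>) (\<psi> \<beta>) = (if \<alpha> = \<beta> then 1 else 0))"

lemma qorthonormal_coeff:
  assumes "qorthonormal p n K \<psi>" and "\<beta> < K"
  shows "qinner p n (\<psi> \<beta>) (\<lambda>x. \<Sum>\<alpha><K. d \<alpha> * \<psi> \<alpha> x) = d \<beta>"
proof -
  have "qinner p n (\<psi> \<beta>) (\<lambda>x. \<Sum>\<alpha><K. d \<alpha> * \<psi> \<alpha> x) = (\<Sum>\<alpha><K. d \<alpha> * qinner p n (\<psi> \<beta>) (\<psi> \<alpha>))"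
    by (simp add: qinner_sum_right)
  also have "\<dots> = (\<Sum>\<alpha><K. if \<alpha> = \<beta> then d \<alpha> else 0)"
    using assms by (intro sum.cong) (auto simp: qorthonormal_def)
  finally show ?thesis
    using assms(2) by simp
qed

lemma qorthonormal_qinner_sum:
  "qorthonormal p n K \<psi> \<Longrightarrow>
    qinner p n (\<lambda>x. \<Sum>\<alpha><K. c \<alpha> * \<psi> \<alpha> x) (\<lambda>x. \<Sum>\<alpha><K. d \<alpha> * \<psi> \<alpha> x) = (\<Sum>\<alpha><K. cnj (c \<alpha>) * d \<alpha>)"
  by (simp add: qinner_sum_left qorthonormal_coeff)

lemma qorthonormal_inj: "qorthonormal p n K \<psi> \<Longrightarrow> inj_on \<psi> {..<K}"
  by (rule inj_onI) (metis lessThan_iff qorthonormal_def zero_neq_one)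

lemma qorthonormal_span_expansion:
  assumes orth: "qorthonormal p n K \<psi>" and "v \<in> qvec.span (\<psi> ` {..<K})"
  shows "v = (\<lambda>x. \<Sum>\<alpha><K. qinner p n (\<psi> \<alpha>) v * \<psi> \<alpha> x)"
proof -
  obtain u where v: "v = (\<lambda>x. \<Sum>\<alpha><K. u (\<psi> \<alpha>) * \<psi> \<alpha> x)"
    using assms(2) by (auto simp: qvec.span_finite sum_qscale_image[OF qorthonormal_inj[OF orth]])
  have "qinner p n (\<psi> \<alpha>) v = u (\<psi> \<alpha>)" if "\<alpha> < K" for \<alpha>
    unfolding v using orth that by (rule qorthonormal_coeff)
  then show ?thesis
    by (simp add: v[symmetric])
qed

lemma qorthonormal_independent: "qorthonormal p n K \<psi> \<Longrightarrow> \<not> qvec.dependent (\<psi> ` {..<K})"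
proof
  assume orth: "qorthonormal p n K \<psi>" and "qvec.dependent (\<psi> ` {..<K})"
  then obtain u \<beta> where \<beta>: "\<beta> < K" "u (\<psi> \<beta>) \<noteq> 0"
    and "(\<Sum>w\<in>\<psi> ` {..<K}. qscale (u w) w) = 0"
    by (auto simp: qvec.dependent_finite)
  then have "(\<lambda>x. \<Sum>\<alpha><K. u (\<psi> \<alpha>) * \<psi> \<alpha> x) = 0"
    by (simp add: sum_qscale_image[OF qorthonormal_inj[OF orth]])
  then have "qinner p n (\<psi> \<beta>) (\<lambda>x. \<Sum>\<alpha><K. u (\<psi> \<alpha>) * \<psi> \<alpha> x) = 0"
    by (simp add: qinner_def)
  with \<beta> show False
    by (simp add: qorthonormal_coeff[OF orth])
qed

lemma dim_span_qorthonormal: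
  assumes "qorthonormal p n K \<psi>"
  shows "qvec.dim (qvec.span (\<psi> ` {..<K})) = K"
  unfolding qvec.dim_span_eq_card_independent[OF qorthonormal_independent[OF assms]]
  using qorthonormal_inj[OF assms] by (simp add: card_image)

lemma span_subset_hilb: "\<forall>\<alpha><K. \<psi> \<alpha> \<in> hilb p n \<Longrightarrow> qvec.span (\<psi> ` {..<K}) \<subseteq> hilb p n"
  by (intro qvec.span_minimal subspace_hilb) auto

lemma projection_qorthonormal:
  assumes orth: "qorthonormal p n K \<psi>" and P: "is_projection_onto p n (qvec.span (\<psi> ` {..<K})) P"
    and v: "v \<in> hilb p n"
  shows "qapply p n P v = (\<lambda>x. \<Sum>\<alpha><K. qinner p n (\<psi> \<alpha>) v * \<psi> \<alpha> x)"
proof -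
  have "qinner p n (\<psi> \<alpha>) (qapply p n P v) = qinner p n (\<psi> \<alpha>) v" if "\<alpha> < K" for \<alpha>
    using that P v by (intro qinner_projection_right) (auto intro: qvec.span_base)
  then show ?thesis
    by (subst qorthonormal_span_expansion[OF orth projection_in_space[OF P v]]) simp
qed

lemma qorthonormal_leakage_le:
  assumes orth: "qorthonormal p n K \<psi>"
    and P: "is_projection_onto p n (qvec.span (\<psi> ` {..<K})) P"
    and \<Psi>: "\<Psi> \<in> qvec.span (\<psi> ` {..<K})" and unit: "qnorm p n \<Psi> = 1"
    and KL: "\<forall>\<alpha><K. \<forall>\<beta><K.
      cmod (qinner p n (\<psi> \<alpha>) (qapply p n F (\<psi> \<beta>)) - (if \<alpha> = \<beta> then \<mu> else 0)) \<le> \<gamma>"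
  shows "(qnorm p n (qapply p n P (qapply p n F \<Psi>)))\<^sup>2
      - (cmod (qinner p n \<Psi> (qapply p n F \<Psi>)))\<^sup>2 \<le> real K ^ 3 * \<gamma>\<^sup>2"
proof -
  define c where "c \<alpha> = qinner p n (\<psi> \<alpha>) \<Psi>" for \<alpha>
  define E where "E \<alpha> \<beta> = qinner p n (\<psi> \<alpha>) (qapply p n F (\<psi> \<beta>)) - (if \<alpha> = \<beta> then \<mu> else 0)" for \<alpha> \<beta>
  define e where "e \<alpha> = (\<Sum>\<beta><K. E \<alpha> \<beta> * c \<beta>)" for \<alpha>
  define b where "b \<alpha> = \<mu> * c \<alpha> + e \<alpha>" for \<alpha>
  have \<Psi>_eq: "\<Psi> = (\<lambda>x. \<Sum>\<alpha><K. c \<alpha> * \<psi> \<alpha> x)"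
    unfolding c_def by (rule qorthonormal_span_expansion[OF orth \<Psi>])
  have "of_real (\<Sum>\<alpha><K. (cmod (c \<alpha>))\<^sup>2) = qinner p n \<Psi> \<Psi>"
    unfolding of_real_sum_cmod_sq by (subst (1 2) \<Psi>_eq) (simp add: qorthonormal_qinner_sum[OF orth])
  then have c_norm: "(\<Sum>\<alpha><K. (cmod (c \<alpha>))\<^sup>2) = 1"
    unfolding qinner_self of_real_eq_iff unit by simp
  have "qinner p n (\<psi> \<alpha>) (qapply p n F \<Psi>) = b \<alpha>" if "\<alpha> < K" for \<alpha>
  proof -
    have "qinner p n (\<psi> \<alpha>) (qapply p n F \<Psi>) = (\<Sum>\<beta><K. c \<beta> * qinner p n (\<psi> \<alpha>) (qapply p n F (\<psi> \<beta>)))"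
      by (subst \<Psi>_eq) (simp add: qapply_sum qinner_sum_right)
    also have "\<dots> = (\<Sum>\<beta><K. (if \<alpha> = \<beta> then c \<beta> * \<mu> else 0) + E \<alpha> \<beta> * c \<beta>)"
      by (intro sum.cong refl) (simp add: E_def algebra_simps)
    finally show ?thesis
      using that by (simp add: sum.distrib b_def e_def mult.commute)
  qed
  then have PF\<Psi>: "qapply p n P (qapply p n F \<Psi>) = (\<lambda>x. \<Sum>\<alpha><K. b \<alpha> * \<psi> \<alpha> x)"
    by (simp add: projection_qorthonormal[OF orth P qapply_in_hilb])
  have "complex_of_real ((qnorm p n (qapply p n P (qapply p n F \<Psi>)))\<^sup>2) = of_real (\<Sum>\<alpha><K. (cmod (b \<alpha>))\<^sup>2)"
    unfolding qinner_self[symmetric] of_real_sum_cmod_sq PF\<Psi> by (rule qorthonormal_qinner_sum[OF orth])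
  moreover have "qinner p n \<Psi> (qapply p n F \<Psi>) = (\<Sum>\<alpha><K. cnj (c \<alpha>) * b \<alpha>)"
  proof -
    have "qinner p n \<Psi> (qapply p n F \<Psi>) = qinner p n \<Psi> (qapply p n P (qapply p n F \<Psi>))"
      using qinner_projection_right[OF P \<Psi> qapply_in_hilb] by simp
    also have "\<dots> = (\<Sum>\<alpha><K. cnj (c \<alpha>) * b \<alpha>)"
      unfolding PF\<Psi> by (subst \<Psi>_eq) (rule qorthonormal_qinner_sum[OF orth])
    finally show ?thesis .
  qed
  ultimately have "(qnorm p n (qapply p n P (qapply p n F \<Psi>)))\<^sup>2 - (cmod (qinner p n \<Psi> (qapply p n F \<Psi>)))\<^sup>2
      = (\<Sum>\<alpha><K. (cmod (e \<alpha>))\<^sup>2) - (cmod (\<Sum>\<alpha><K. cnj (c \<alpha>) * e \<alpha>))\<^sup>2"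
    unfolding of_real_eq_iff b_def using sum_sq_shift_diff_eq[OF c_norm] by simp
  also have "\<dots> \<le> (\<Sum>\<alpha><K. (cmod (e \<alpha>))\<^sup>2)"
    by simp
  also have "\<dots> \<le> real K ^ 3 * \<gamma>\<^sup>2"
    using sum_sq_matrix_vector_le[of "{..<K}" c E \<gamma>] c_norm KL unfolding e_def E_def by simp
  finally show ?thesis .
qed

theorem corollary1:
  fixes p n k d K :: nat and \<gamma> \<delta> :: real and \<psi> :: "nat \<Rightarrow> qvec" and C :: "qvec set"
  assumes p_pos: "0 < p"
    and K_def: "K = p ^ k"
    and in_space: "\<forall>\<alpha><K. \<psi> \<alpha> \<in> hilb p n"
    and orthonormal: "\<forall>\<alpha><K. \<forall>\<beta><K. qinner p n (\<psi> \<alpha>) (\<psi> \<beta>) = (if \<alpha> = \<beta> then 1 else 0)"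
    and C_span: "C = module.span qscale (\<psi> ` {..<K})"
    and gamma_pos: "\<gamma> > 0"
    and KL: "\<forall>F. d_local p n d F \<longrightarrow> (\<forall>\<alpha><K. \<forall>\<beta><K.
        cmod (qinner p n (\<psi> \<alpha>) (qapply p n F (\<psi> \<beta>))
              - (if \<alpha> = \<beta> then 1 else 0) * qinner p n (\<psi> 0) (qapply p n F (\<psi> 0)))
          \<le> \<gamma> * opnorm p n F)"
    and delta_gt: "\<delta> > real K ^ 5 * \<gamma>\<^sup>2"
  shows "AQEDC p (real K ^ 5 * \<gamma>\<^sup>2 / \<delta>) \<delta> n k d C"
proof -
  have orth: "qorthonormal p n K \<psi>"
    using orthonormal unfolding qorthonormal_def .
  define B where "B = real K ^ 5 * \<gamma>\<^sup>2"
  have leakage: "(qnorm p n (qapply p n P (qapply p n F \<Psi>)))\<^sup>2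
      - (cmod (qinner p n \<Psi> (qapply p n F \<Psi>)))\<^sup>2 \<le> B"
    if P: "is_projection_onto p n C P" and \<Psi>: "\<Psi> \<in> C" "qnorm p n \<Psi> = 1"
      and F: "d_local p n d F" "opnorm p n F \<le> 1" for P \<Psi> F
  proof -
    have "\<gamma> * opnorm p n F \<le> \<gamma>"
      using F(2) gamma_pos by (simp add: mult_left_le)
    then have "\<forall>\<alpha><K. \<forall>\<beta><K. cmod (qinner p n (\<psi> \<alpha>) (qapply p n F (\<psi> \<beta>))
        - (if \<alpha> = \<beta> then qinner p n (\<psi> 0) (qapply p n F (\<psi> 0)) else 0)) \<le> \<gamma>"
      using KL F(1) by (force simp: if_distrib cong: if_cong)
    then have "(qnorm p n (qapply p n P (qapply p n F \<Psi>)))\<^sup>2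
        - (cmod (qinner p n \<Psi> (qapply p n F \<Psi>)))\<^sup>2 \<le> real K ^ 3 * \<gamma>\<^sup>2"
      using orth P \<Psi> unfolding C_span by (intro qorthonormal_leakage_le) auto
    also have "\<dots> \<le> B"
      unfolding B_def using p_pos K_def by (intro mult_right_mono power_increasing) auto
    finally show ?thesis .
  qed
  have B: "0 \<le> B"
    by (simp add: B_def)
  with delta_gt have \<delta>: "0 < \<delta>"
    unfolding B_def by linarith
  have C: "qvec.subspace C" "C \<subseteq> hilb p n" "qvec.dim C = p ^ k"
    using span_subset_hilb[OF in_space] dim_span_qorthonormal[OF orth] unfolding C_span K_def by auto
  show ?thesis
    using AQEDC_of_leakage_le[OF C leakage B \<delta>] unfolding B_def .
qed

end
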